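(* Let $X$ be a collectionwise normal space and $\mathcal{U}$ an open cover of $X$. If there is a sequence $(\mathcal{U}_n)_{n\ge1}$ of open covers of $X$ such that for every $U\in\mathcal{U}$ and every $x\in U$ there is $n\ge1$ with $st(x,\mathcal{U}_n)\subset U$, then $X$ admits a $\mathcal{U}$-small partition of unity.
   Context: $st(x,\mathcal{W})=\bigcup\{W\in\mathcal{W}:x\in W\}$. Collectionwise normal means $T_1$ and every discrete family of closed sets $\{A_s\}$ admits a discrete family of open sets $\{U_s\}$ with $A_s\subset U_s$ (a family is discrete if each point has a neighborhood meeting at most one member). A partition of unity on $X$ indexed by a nonempty set $S$ is a family $\{f_s\}_{s\in S}$ of functions $f_s:X\to[0,1]$ with $\sum_s f_s(x)=1$ for all $x$, such that the induced map $X\to l_1(S)$ is continuous for the $l_1$-norm; it is $\mathcal{U}$-small if each carrier $f_s^{-1}((0,1])$ lies in some element of $\mathcal{U}$. *)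

theory Defs
  imports "HOL-Analysis.Analysis"
begin

definition st :: "'a \<Rightarrow> 'a set set \<Rightarrow> 'a set" where
  "st x \<W> = \<Union>{W \<in> \<W>. x \<in> W}"

definition discrete_family :: "'a::topological_space set set \<Rightarrow> bool" where
  "discrete_family \<A> \<longleftrightarrow>
     (\<forall>x. \<exists>V. open V \<and> x \<in> V \<and>
        (\<forall>A\<in>\<A>. \<forall>B\<in>\<A>. V \<inter> A \<noteq> {} \<and> V \<inter> B \<noteq> {} \<longrightarrow> A = B))"

definition discrete_indexed :: "'i set \<Rightarrow> ('i \<Rightarrow> 'a::topological_space set) \<Rightarrow> bool" where
  "discrete_indexed I U \<longleftrightarrow>
     (\<forall>x. \<exists>V. open V \<and> x \<in> V \<and>
        (\<forall>i\<in>I. \<forall>j\<in>I. V \<inter> U i \<noteq> {} \<and> V \<inter> U j \<noteq> {} \<longrightarrow> i = j))"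

definition collectionwise_normal :: "'a::topological_space itself \<Rightarrow> bool" where
  "collectionwise_normal _ \<longleftrightarrow>
     (\<forall>x y::'a. x \<noteq> y \<longrightarrow> (\<exists>U. open U \<and> x \<in> U \<and> y \<notin> U)) \<and>
     (\<forall>\<A>::'a set set. (\<forall>A\<in>\<A>. closed A) \<and> discrete_family \<A> \<longrightarrow>
        (\<exists>U::'a set \<Rightarrow> 'a set. (\<forall>A\<in>\<A>. open (U A) \<and> A \<subseteq> U A) \<and> discrete_indexed \<A> U))"

definition open_cover :: "'a::topological_space set set \<Rightarrow> bool" where
  "open_cover \<U> \<longleftrightarrow> (\<forall>U\<in>\<U>. open U) \<and> \<Union>\<U> = UNIV"

text \<open>Partition of unity indexed by S: values in [0,1], pointwise sum 1, and the induced
  map X \<rightarrow> l1(S) continuous for the l1 norm.\<close>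
definition partition_of_unity :: "'s set \<Rightarrow> ('s \<Rightarrow> 'a::topological_space \<Rightarrow> real) \<Rightarrow> bool" where
  "partition_of_unity S f \<longleftrightarrow>
     S \<noteq> {} \<and>
     (\<forall>s\<in>S. \<forall>x. 0 \<le> f s x \<and> f s x \<le> 1) \<and>
     (\<forall>x. ((\<lambda>s. f s x) has_sum 1) S) \<and>
     (\<forall>x. \<forall>e>0. \<exists>V. open V \<and> x \<in> V \<and>
        (\<forall>y\<in>V. infsum (\<lambda>s. \<bar>f s y - f s x\<bar>) S < e))"

definition small_partition :: "'a::topological_space set set \<Rightarrow> 's set \<Rightarrow> ('s \<Rightarrow> 'a \<Rightarrow> real) \<Rightarrow> bool" where
  "small_partition \<U> S f \<longleftrightarrow> (\<forall>s\<in>S. \<exists>U\<in>\<U>. {x. f s x \<in> {0<..1}} \<subseteq> U)"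

end

theory Submission
  imports Defs
begin

text \<open>Well-order \<open>\<U>\<close>. For each \<open>n\<close> the points whose \<open>\<V> n\<close>-star lies in \<open>U\<close>, minus the
  earlier members of \<open>\<U>\<close>, form a discrete family of closed sets \<open>A n U \<subseteq> U\<close>, and these
  cover the space as \<open>n\<close> varies. Collectionwise normality expands each family to a discrete
  family of open subsets of the members of \<open>\<U>\<close>; Urysohn functions \<open>g n U\<close> supported there
  are, near every point, nonzero for at most one \<open>U\<close>, so they are continuous into \<open>l\<^sub>1(\<U>)\<close>.
  The sums \<open>h U = \<Sum>n. 2\<^sup>-\<^sup>n g n U\<close> are still \<open>l\<^sub>1\<close>-continuous, have bounded total mass
  and are positive somewhere at every point, and normalising them gives the partition of unity.\<close>

section \<open>Finite sums and geometric series\<close>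

lemma nonneg_finite_sums_le_summable_on:
  fixes \<phi> :: "'s \<Rightarrow> real"
  assumes "\<And>s. s \<in> S \<Longrightarrow> 0 \<le> \<phi> s"
    and "\<And>F. finite F \<Longrightarrow> F \<subseteq> S \<Longrightarrow> sum \<phi> F \<le> B"
  shows "\<phi> summable_on S" and "infsum \<phi> S \<le> B"
proof -
  show sum: "\<phi> summable_on S"
    by (rule nonneg_bdd_above_summable_on) (use assms in \<open>auto simp: bdd_above_def\<close>)
  show "infsum \<phi> S \<le> B"
    by (rule infsum_le_finite_sums[OF sum assms(2)])
qed

lemma abs_infsum_diff_le:
  fixes a b :: "'s \<Rightarrow> real"
  assumes "a summable_on S" "b summable_on S"
    and "\<And>F. finite F \<Longrightarrow> F \<subseteq> S \<Longrightarrow> (\<Sum>s\<in>F. \<bar>a s - b s\<bar>) \<le> \<delta>"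
  shows "\<bar>infsum a S - infsum b S\<bar> \<le> \<delta>"
proof -
  define d where "d s = \<bar>a s - b s\<bar>" for s
  have d: "d summable_on S" "infsum d S \<le> \<delta>"
    using nonneg_finite_sums_le_summable_on[of S d \<delta>] assms(3) by (auto simp: d_def)
  have "infsum a S \<le> infsum (\<lambda>s. b s + d s) S" "infsum b S \<le> infsum (\<lambda>s. a s + d s) S"
    by (intro infsum_mono summable_on_add assms d; simp add: d_def)+
  then show ?thesis
    using d(2) by (simp add: infsum_add assms(1,2) d(1))
qed

lemma sum_le_if_at_most_one_nonzero:
  fixes \<phi> :: "'s \<Rightarrow> real"
  assumes "finite F" "0 \<le> c"
    and "\<And>s t. s \<in> F \<Longrightarrow> t \<in> F \<Longrightarrow> \<phi> s \<noteq> 0 \<Longrightarrow> \<phi> t \<noteq> 0 \<Longrightarrow> s = t"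
    and "\<And>s. s \<in> F \<Longrightarrow> \<phi> s \<le> c"
  shows "sum \<phi> F \<le> c"
proof (cases "\<exists>s\<in>F. \<phi> s \<noteq> 0")
  case True
  then obtain s where s: "s \<in> F" "\<phi> s \<noteq> 0" by blast
  have "sum \<phi> F = \<phi> s + sum \<phi> (F - {s})"
    using assms(1) s(1) by (rule sum.remove)
  also have "sum \<phi> (F - {s}) = 0"
    using assms(3) s by (intro sum.neutral) blast
  finally have "sum \<phi> F = \<phi> s" by simp
  then show ?thesis using assms(4) s(1) by simp
next
  case False
  then show ?thesis using assms(2) by simp
qed

lemma summable_geometric_weighted:
  fixes c :: "nat \<Rightarrow> real"
  assumes "\<And>n. \<bar>c n\<bar> \<le> M"
  shows "summable (\<lambda>n. (1/2)^n * c n)"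
proof (rule summable_comparison_test)
  show "\<exists>N. \<forall>n\<ge>N. norm ((1/2)^n * c n) \<le> M * (1/2)^n"
    using assms by (auto simp: abs_mult mult.commute intro!: mult_left_mono)
  show "summable (\<lambda>n. M * (1/2::real)^n)"
    by (intro summable_mult summable_geometric) auto
qed

lemma suminf_geometric_weighted_le:
  fixes c :: "nat \<Rightarrow> real"
  assumes "\<And>n. 0 \<le> c n" "\<And>n. c n \<le> M"
  shows "(\<Sum>n. (1/2)^n * c n) \<le> 2 * M"
proof -
  have "summable (\<lambda>n. (1/2::real)^n * c n)"
    by (rule summable_geometric_weighted[of _ M]) (use assms in \<open>simp add: abs_le_iff\<close>)
  then have "(\<Sum>n. (1/2)^n * c n) \<le> (\<Sum>n. M * (1/2::real)^n)"
    using assms by (intro suminf_le summable_mult summable_geometric) (auto simp: mult.commute mult_left_mono)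
  also have "\<dots> = 2 * M"
    by (subst suminf_mult) (auto simp: suminf_geometric)
  finally show ?thesis .
qed

lemma suminf_geometric_weighted_tail_le:
  fixes c :: "nat \<Rightarrow> real"
  assumes "\<And>n. 0 \<le> c n" "\<And>n. c n \<le> M" "\<And>n. n < N \<Longrightarrow> c n \<le> \<epsilon>" "0 \<le> \<epsilon>"
  shows "(\<Sum>n. (1/2)^n * c n) \<le> 2 * \<epsilon> + 2 * M * (1/2)^N"
proof -
  have bounded: "\<bar>c n\<bar> \<le> M" for n
    using assms(1,2) by (simp add: abs_le_iff)
  have "(\<Sum>n. (1/2)^n * c n) = (\<Sum>n. (1/2)^(n+N) * c (n+N)) + (\<Sum>i<N. (1/2)^i * c i)"
    by (rule suminf_split_initial_segment[OF summable_geometric_weighted[OF bounded]])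
  also have "(\<Sum>n. (1/2::real)^(n+N) * c (n+N)) = (1/2)^N * (\<Sum>n. (1/2)^n * c (n+N))"
    using summable_geometric_weighted[of "\<lambda>n. c (n+N)", OF bounded]
    by (subst suminf_mult[symmetric]) (auto simp: power_add mult_ac)
  also have "(\<Sum>n. (1/2::real)^n * c (n+N)) \<le> 2 * M"
    by (rule suminf_geometric_weighted_le) (use assms in auto)
  also have "(\<Sum>i<N. (1/2::real)^i * c i) \<le> \<epsilon> * (\<Sum>i<N. (1/2)^i)"
    unfolding sum_distrib_left by (rule sum_mono) (use assms in \<open>auto simp: mult.commute intro: mult_left_mono\<close>)
  also have "(\<Sum>i<N. (1/2::real)^i) \<le> 2"
    using sum_le_suminf[OF summable_geometric[of "1/2::real"], of "{..<N}"]
    by (simp add: suminf_geometric)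
  finally show ?thesis
    using mult_right_mono[OF _ assms(4)] by (simp add: algebra_simps)
qed

lemma suminf_geometric_weighted_pos:
  fixes c :: "nat \<Rightarrow> real"
  assumes "\<And>n. 0 \<le> c n" "\<And>n. c n \<le> M" "0 < c m"
  shows "0 < (\<Sum>n. (1/2)^n * c n)"
proof -
  have "summable (\<lambda>n. (1/2::real)^n * c n)"
    by (rule summable_geometric_weighted[of _ M]) (use assms(1,2) in \<open>simp add: abs_le_iff\<close>)
  then have "(\<Sum>n\<in>{m}. (1/2::real)^n * c n) \<le> (\<Sum>n. (1/2)^n * c n)"
    using assms(1) by (intro sum_le_suminf) auto
  moreover have "0 < (1/2::real)^m * c m"
    using assms(3) by simp
  ultimately show ?thesis
    by simp
qed

section \<open>Families of functions continuous into \<open>l\<^sub>1\<close>\<close>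

text \<open>The \<open>l\<^sub>1\<close>-continuity required in \<open>partition_of_unity\<close>, phrased through finite
  subsums so that no summability is presupposed.\<close>
definition l1_continuous :: "'s set \<Rightarrow> ('s \<Rightarrow> 'a::topological_space \<Rightarrow> real) \<Rightarrow> bool" where
  "l1_continuous S \<phi> \<longleftrightarrow>
     (\<forall>x \<epsilon>. 0 < \<epsilon> \<longrightarrow> (\<exists>V. open V \<and> x \<in> V \<and>
        (\<forall>y\<in>V. \<forall>F. finite F \<longrightarrow> F \<subseteq> S \<longrightarrow> (\<Sum>s\<in>F. \<bar>\<phi> s y - \<phi> s x\<bar>) \<le> \<epsilon>)))"

lemma sum_le_one_if_discrete_supports:
  fixes g :: "'s \<Rightarrow> 'a::topological_space \<Rightarrow> real"
  assumes "discrete_indexed S (\<lambda>s. {x. g s x \<noteq> 0})"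
    and "\<And>s x. s \<in> S \<Longrightarrow> g s x \<le> 1"
    and "finite F" "F \<subseteq> S"
  shows "(\<Sum>s\<in>F. g s x) \<le> 1"
proof (rule sum_le_if_at_most_one_nonzero)
  obtain V where "x \<in> V"
    and V: "\<And>s t. s \<in> S \<Longrightarrow> t \<in> S \<Longrightarrow> V \<inter> {x. g s x \<noteq> 0} \<noteq> {} \<Longrightarrow> V \<inter> {x. g t x \<noteq> 0} \<noteq> {} \<Longrightarrow> s = t"
    using assms(1) unfolding discrete_indexed_def by metis
  then show "s = t" if "s \<in> F" "t \<in> F" "g s x \<noteq> 0" "g t x \<noteq> 0" for s t
    using that assms(4) by blast
qed (use assms in auto)

lemma l1_continuous_if_discrete_supports:
  fixes g :: "'s \<Rightarrow> 'a::topological_space \<Rightarrow> real"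
  assumes disc: "discrete_indexed S (\<lambda>s. {x. g s x \<noteq> 0})"
    and cont: "\<And>s. s \<in> S \<Longrightarrow> continuous_on UNIV (g s)"
  shows "l1_continuous S g"
  unfolding l1_continuous_def
proof (intro allI impI)
  fix x and \<epsilon> :: real
  assume "0 < \<epsilon>"
  obtain V where V: "open V" "x \<in> V"
    and V_one: "\<And>s t. s \<in> S \<Longrightarrow> t \<in> S \<Longrightarrow> V \<inter> {x. g s x \<noteq> 0} \<noteq> {} \<Longrightarrow> V \<inter> {x. g t x \<noteq> 0} \<noteq> {} \<Longrightarrow> s = t"
    using disc unfolding discrete_indexed_def by metis
  show "\<exists>V. open V \<and> x \<in> V \<and> (\<forall>y\<in>V. \<forall>F. finite F \<longrightarrow> F \<subseteq> S \<longrightarrow> (\<Sum>s\<in>F. \<bar>g s y - g s x\<bar>) \<le> \<epsilon>)"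
  proof (cases "\<exists>s0\<in>S. \<exists>z\<in>V. g s0 z \<noteq> 0")
    case True
    then obtain s0 where s0: "s0 \<in> S" "V \<inter> {x. g s0 x \<noteq> 0} \<noteq> {}" by blast
    define Q where "Q = g s0 -` ball (g s0 x) \<epsilon>"
    have "open Q"
      unfolding Q_def by (rule open_vimage[OF open_ball cont[OF s0(1)]])
    have only_s0: "s = s0" if "s \<in> S" "y \<in> V" "\<bar>g s y - g s x\<bar> \<noteq> 0" for s y
      using V_one[OF that(1) s0(1) _ s0(2)] that(2,3) V(2) by (cases "g s y = 0") auto
    have "(\<Sum>s\<in>F. \<bar>g s y - g s x\<bar>) \<le> \<epsilon>" if "y \<in> V \<inter> Q" "finite F" "F \<subseteq> S" for y F
    proof (rule sum_le_if_at_most_one_nonzero)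
      show "s = t" if "s \<in> F" "t \<in> F" "\<bar>g s y - g s x\<bar> \<noteq> 0" "\<bar>g t y - g t x\<bar> \<noteq> 0" for s t
        using only_s0[of s y] only_s0[of t y] that \<open>y \<in> V \<inter> Q\<close> \<open>F \<subseteq> S\<close> by blast
      show "\<bar>g s y - g s x\<bar> \<le> \<epsilon>" if "s \<in> F" for s
        using only_s0[of s y] that \<open>y \<in> V \<inter> Q\<close> \<open>F \<subseteq> S\<close> \<open>0 < \<epsilon>\<close>
        by (cases "\<bar>g s y - g s x\<bar> = 0") (auto simp: Q_def dist_real_def abs_minus_commute)
    qed (use that \<open>0 < \<epsilon>\<close> in auto)
    then show ?thesis
      using V \<open>open Q\<close> \<open>0 < \<epsilon>\<close> by (intro exI[of _ "V \<inter> Q"]) (auto simp: Q_def)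
  next
    case False
    then have "(\<Sum>s\<in>F. \<bar>g s y - g s x\<bar>) = 0" if "y \<in> V" "F \<subseteq> S" for y F
      using that V(2) by (intro sum.neutral) (metis subsetD abs_0 diff_self)
    then show ?thesis
      using V \<open>0 < \<epsilon>\<close> by (intro exI[of _ V]) auto
  qed
qed

lemma sum_abs_suminf_geometric_diff_le:
  fixes a b :: "nat \<Rightarrow> 's \<Rightarrow> real"
  assumes "\<And>n s. s \<in> F \<Longrightarrow> \<bar>a n s\<bar> \<le> M" "\<And>n s. s \<in> F \<Longrightarrow> \<bar>b n s\<bar> \<le> M"
  shows "(\<Sum>s\<in>F. \<bar>(\<Sum>n. (1/2)^n * a n s) - (\<Sum>n. (1/2)^n * b n s)\<bar>)
    \<le> (\<Sum>n. (1/2)^n * (\<Sum>s\<in>F. \<bar>a n s - b n s\<bar>))"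
proof -
  have summable: "summable (\<lambda>n. (1/2::real)^n * a n s)" "summable (\<lambda>n. (1/2::real)^n * b n s)"
    "summable (\<lambda>n. (1/2::real)^n * \<bar>a n s - b n s\<bar>)" if "s \<in> F" for s
  proof -
    show "summable (\<lambda>n. (1/2::real)^n * a n s)" "summable (\<lambda>n. (1/2::real)^n * b n s)"
      using assms that by (auto intro: summable_geometric_weighted[of _ M])
    have "\<bar>\<bar>a n s - b n s\<bar>\<bar> \<le> 2 * M" for n
      using assms[OF that, of n] by linarith
    then show "summable (\<lambda>n. (1/2::real)^n * \<bar>a n s - b n s\<bar>)"
      by (rule summable_geometric_weighted)
  qed
  have "(\<Sum>s\<in>F. \<bar>(\<Sum>n. (1/2)^n * a n s) - (\<Sum>n. (1/2)^n * b n s)\<bar>)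
      = (\<Sum>s\<in>F. \<bar>\<Sum>n. (1/2)^n * (a n s - b n s)\<bar>)"
    using summable by (intro sum.cong) (simp_all add: suminf_diff right_diff_distrib)
  also have "\<dots> \<le> (\<Sum>s\<in>F. \<Sum>n. (1/2)^n * \<bar>a n s - b n s\<bar>)"
    using summable by (intro sum_mono order_trans[OF summable_rabs]) (auto simp: abs_mult)
  also have "\<dots> = (\<Sum>n. (1/2)^n * (\<Sum>s\<in>F. \<bar>a n s - b n s\<bar>))"
    using summable by (subst suminf_sum[symmetric]) (auto simp: sum_distrib_left)
  finally show ?thesis .
qed

lemma sum_suminf_geometric_le:
  fixes g :: "nat \<Rightarrow> 's \<Rightarrow> 'a \<Rightarrow> real"
  assumes nonneg: "\<And>n s x. s \<in> S \<Longrightarrow> 0 \<le> g n s x"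
    and sum_le: "\<And>n x F. finite F \<Longrightarrow> F \<subseteq> S \<Longrightarrow> (\<Sum>s\<in>F. g n s x) \<le> 1"
    and "finite F" "F \<subseteq> S"
  shows "(\<Sum>s\<in>F. \<Sum>n. (1/2)^n * g n s x) \<le> 2"
proof -
  have "g n s x \<le> 1" if "s \<in> S" for n s
    using sum_le[of "{s}"] that by simp
  then have "summable (\<lambda>n. (1/2::real)^n * g n s x)" if "s \<in> S" for s
    using nonneg that by (intro summable_geometric_weighted[of _ 1]) (simp add: abs_le_iff)
  then have "(\<Sum>s\<in>F. \<Sum>n. (1/2)^n * g n s x) = (\<Sum>n. (1/2)^n * (\<Sum>s\<in>F. g n s x))"
    using assms(4) by (subst suminf_sum[symmetric]) (auto simp: sum_distrib_left)
  also have "\<dots> \<le> 2 * 1"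
    using sum_le assms(3,4) by (intro suminf_geometric_weighted_le) (auto intro!: sum_nonneg nonneg)
  finally show ?thesis by simp
qed

text \<open>Finitely many terms are controlled by continuity, the rest by the geometric weights.\<close>
lemma l1_continuous_suminf_geometric:
  fixes g :: "nat \<Rightarrow> 's \<Rightarrow> 'a::topological_space \<Rightarrow> real"
  assumes nonneg: "\<And>n s x. s \<in> S \<Longrightarrow> 0 \<le> g n s x"
    and sum_le: "\<And>n x F. finite F \<Longrightarrow> F \<subseteq> S \<Longrightarrow> (\<Sum>s\<in>F. g n s x) \<le> 1"
    and cont: "\<And>n. l1_continuous S (g n)"
  shows "l1_continuous S (\<lambda>s x. \<Sum>n. (1/2)^n * g n s x)"
  unfolding l1_continuous_def
proof (intro allI impI)
  fix x and \<delta> :: real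
  assume "0 < \<delta>"
  have bounded: "\<bar>g n s z\<bar> \<le> 1" if "s \<in> S" for n s z
    using nonneg[OF that, of n z] sum_le[of "{s}" n z] that by simp
  have diff_le_two: "(\<Sum>s\<in>F. \<bar>g n s y - g n s x\<bar>) \<le> 2" if "finite F" "F \<subseteq> S" for n y F
  proof -
    have "(\<Sum>s\<in>F. \<bar>g n s y - g n s x\<bar>) \<le> (\<Sum>s\<in>F. g n s y) + (\<Sum>s\<in>F. g n s x)"
      unfolding sum.distrib[symmetric] using that by (intro sum_mono) (smt (verit) nonneg subsetD)
    then show ?thesis using sum_le[OF that, of n x] sum_le[OF that, of n y] by linarith
  qed
  obtain N where N: "(1/2::real)^N < \<delta>/8"
    using real_arch_pow_inv[of "\<delta>/8" "1/2"] \<open>0 < \<delta>\<close> by auto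
  have "\<forall>n. \<exists>V. open V \<and> x \<in> V \<and>
      (\<forall>y\<in>V. \<forall>F. finite F \<longrightarrow> F \<subseteq> S \<longrightarrow> (\<Sum>s\<in>F. \<bar>g n s y - g n s x\<bar>) \<le> \<delta>/4)"
    using cont[unfolded l1_continuous_def, rule_format, of "\<delta>/4" x] \<open>0 < \<delta>\<close> by simp
  then obtain V where V: "\<And>n. open (V n)" "\<And>n. x \<in> V n"
    "\<And>n y F. y \<in> V n \<Longrightarrow> finite F \<Longrightarrow> F \<subseteq> S \<Longrightarrow> (\<Sum>s\<in>F. \<bar>g n s y - g n s x\<bar>) \<le> \<delta>/4"
    by metis
  have "(\<Sum>s\<in>F. \<bar>(\<Sum>n. (1/2)^n * g n s y) - (\<Sum>n. (1/2)^n * g n s x)\<bar>) \<le> \<delta>"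
    if y: "y \<in> (\<Inter>n<N. V n)" and F: "finite F" "F \<subseteq> S" for y F
  proof -
    have "(\<Sum>s\<in>F. \<bar>(\<Sum>n. (1/2)^n * g n s y) - (\<Sum>n. (1/2)^n * g n s x)\<bar>)
        \<le> (\<Sum>n. (1/2)^n * (\<Sum>s\<in>F. \<bar>g n s y - g n s x\<bar>))"
      by (rule sum_abs_suminf_geometric_diff_le[of _ _ 1]) (use F bounded in blast)+
    also have "\<dots> \<le> 2 * (\<delta>/4) + 2 * 2 * (1/2)^N"
    proof (rule suminf_geometric_weighted_tail_le)
      show "(\<Sum>s\<in>F. \<bar>g n s y - g n s x\<bar>) \<le> \<delta>/4" if "n < N" for n
        using V(3)[OF _ F] y that by blast
    qed (use diff_le_two[OF F] \<open>0 < \<delta>\<close> in \<open>auto intro: sum_nonneg\<close>)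
    also have "\<dots> \<le> \<delta>"
      using N by simp
    finally show ?thesis .
  qed
  moreover have "open (\<Inter>n<N. V n)" "x \<in> (\<Inter>n<N. V n)"
    using V(1,2) by auto
  ultimately show "\<exists>V. open V \<and> x \<in> V \<and> (\<forall>y\<in>V. \<forall>F. finite F \<longrightarrow> F \<subseteq> S \<longrightarrow>
      (\<Sum>s\<in>F. \<bar>(\<Sum>n. (1/2)^n * g n s y) - (\<Sum>n. (1/2)^n * g n s x)\<bar>) \<le> \<delta>)"
    by blast
qed

lemma sum_abs_normalised_diff_le:
  fixes a b :: "'s \<Rightarrow> real"
  assumes "\<And>s. s \<in> F \<Longrightarrow> 0 \<le> b s" "sum b F \<le> B" "0 < A" "0 < B"
  shows "(\<Sum>s\<in>F. \<bar>a s / A - b s / B\<bar>) \<le> ((\<Sum>s\<in>F. \<bar>a s - b s\<bar>) + \<bar>A - B\<bar>) / A"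
proof -
  have pointwise: "\<bar>a s / A - b s / B\<bar> \<le> \<bar>a s - b s\<bar> / A + b s * (\<bar>A - B\<bar> / (A * B))"
    if "s \<in> F" for s
  proof -
    have "a s / A - b s / B = (a s - b s) / A + b s * ((B - A) / (A * B))"
      using assms(3,4) by (simp add: field_simps)
    also have "\<bar>\<dots>\<bar> \<le> \<bar>a s - b s\<bar> / A + b s * (\<bar>A - B\<bar> / (A * B))"
      using assms(1,3,4) that by (auto simp: abs_mult abs_minus_commute intro: order_trans[OF abs_triangle_ineq])
    finally show ?thesis .
  qed
  have "(\<Sum>s\<in>F. \<bar>a s / A - b s / B\<bar>) \<le> (\<Sum>s\<in>F. \<bar>a s - b s\<bar>) / A + sum b F * (\<bar>A - B\<bar> / (A * B))"
    using sum_mono[OF pointwise] by (simp add: sum.distrib sum_divide_distrib sum_distrib_right)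
  also have "sum b F * (\<bar>A - B\<bar> / (A * B)) \<le> B * (\<bar>A - B\<bar> / (A * B))"
    using assms(2-4) by (intro mult_right_mono) auto
  also have "B * (\<bar>A - B\<bar> / (A * B)) = \<bar>A - B\<bar> / A"
    using assms(4) by simp
  finally show ?thesis by (simp add: add_divide_distrib)
qed

lemma infsum_abs_normalised_diff_le:
  fixes a b :: "'s \<Rightarrow> real"
  assumes nonneg: "\<And>s. s \<in> S \<Longrightarrow> 0 \<le> b s"
    and summable: "a summable_on S" "b summable_on S"
    and pos: "0 < infsum a S" "0 < infsum b S"
    and close: "\<And>F. finite F \<Longrightarrow> F \<subseteq> S \<Longrightarrow> (\<Sum>s\<in>F. \<bar>a s - b s\<bar>) \<le> \<delta>"
  shows "infsum (\<lambda>s. \<bar>b s / infsum b S - a s / infsum a S\<bar>) S \<le> 2 * \<delta> / infsum a S"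
proof (rule nonneg_finite_sums_le_summable_on(2))
  fix F assume F: "finite F" "F \<subseteq> S"
  have "sum b F \<le> infsum b S"
    using summable(2) nonneg F by (intro finite_sum_le_infsum) auto
  then have "(\<Sum>s\<in>F. \<bar>a s / infsum a S - b s / infsum b S\<bar>)
      \<le> ((\<Sum>s\<in>F. \<bar>a s - b s\<bar>) + \<bar>infsum a S - infsum b S\<bar>) / infsum a S"
    using nonneg F pos by (intro sum_abs_normalised_diff_le) auto
  also have "\<dots> \<le> 2 * \<delta> / infsum a S"
    using close[OF F] abs_infsum_diff_le[OF summable close] pos(1) by (intro divide_right_mono) auto
  finally show "(\<Sum>s\<in>F. \<bar>b s / infsum b S - a s / infsum a S\<bar>) \<le> 2 * \<delta> / infsum a S"
    by (simp add: abs_minus_commute)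
qed simp

lemma partition_of_unity_normalise:
  fixes h :: "'s \<Rightarrow> 'a::topological_space \<Rightarrow> real"
  assumes nonneg: "\<And>s x. s \<in> S \<Longrightarrow> 0 \<le> h s x"
    and sum_le: "\<And>x F. finite F \<Longrightarrow> F \<subseteq> S \<Longrightarrow> (\<Sum>s\<in>F. h s x) \<le> B"
    and positive: "\<And>x. \<exists>s\<in>S. 0 < h s x"
    and cont: "l1_continuous S h"
  shows "partition_of_unity S (\<lambda>s x. h s x / infsum (\<lambda>s. h s x) S)"
proof -
  define H where "H x = infsum (\<lambda>s. h s x) S" for x
  have summable: "(\<lambda>s. h s x) summable_on S" for x
    using nonneg_finite_sums_le_summable_on(1)[OF nonneg sum_le] .
  have sum_le_H: "(\<Sum>s\<in>F. h s x) \<le> H x" if "finite F" "F \<subseteq> S" for x F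
    unfolding H_def using summable nonneg that by (intro finite_sum_le_infsum) auto
  have H_pos: "0 < H x" for x
    using positive[of x] sum_le_H[of "{_}" x] by fastforce
  have "partition_of_unity S (\<lambda>s x. h s x / H x)"
    unfolding partition_of_unity_def
  proof (intro conjI ballI allI impI)
    show "S \<noteq> {}"
      using positive by blast
    show "0 \<le> h s x / H x" "h s x / H x \<le> 1" if "s \<in> S" for s x
      using nonneg[OF that] sum_le_H[of "{s}" x] H_pos[of x] that by simp_all
    show "((\<lambda>s. h s x / H x) has_sum 1) S" for x
      using has_sum_cmult_right[OF has_sum_infsum[OF summable[of x]], of "1 / H x"] H_pos[of x]
      by (simp add: H_def)
    show "\<exists>V. open V \<and> x \<in> V \<and> (\<forall>y\<in>V. infsum (\<lambda>s. \<bar>h s y / H y - h s x / H x\<bar>) S < e)"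
      if "0 < e" for x e
    proof -
      define \<delta> where "\<delta> = e * H x / 4"
      have "0 < \<delta>" using H_pos[of x] \<open>0 < e\<close> by (simp add: \<delta>_def)
      then obtain V where V: "open V" "x \<in> V"
        and "\<And>y F. y \<in> V \<Longrightarrow> finite F \<Longrightarrow> F \<subseteq> S \<Longrightarrow> (\<Sum>s\<in>F. \<bar>h s y - h s x\<bar>) \<le> \<delta>"
        using cont[unfolded l1_continuous_def, rule_format, of \<delta> x] by blast
      then have close: "\<And>y F. y \<in> V \<Longrightarrow> finite F \<Longrightarrow> F \<subseteq> S \<Longrightarrow> (\<Sum>s\<in>F. \<bar>h s x - h s y\<bar>) \<le> \<delta>"
        by (simp add: abs_minus_commute)
      have "infsum (\<lambda>s. \<bar>h s y / H y - h s x / H x\<bar>) S \<le> 2 * \<delta> / H x" if "y \<in> V" for y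
        using infsum_abs_normalised_diff_le[of S "\<lambda>s. h s y" "\<lambda>s. h s x", OF _ summable summable _ _ close[OF that]]
          nonneg H_pos[of x] H_pos[of y]
        unfolding H_def by blast
      moreover have "2 * \<delta> / H x < e"
        using H_pos[of x] \<open>0 < e\<close> by (simp add: \<delta>_def)
      ultimately show ?thesis
        using V by (intro exI[of _ V]) (auto intro: le_less_trans)
    qed
  qed
  then show ?thesis
    unfolding H_def .
qed

section \<open>Discrete families in collectionwise normal spaces\<close>

lemma discrete_indexed_mono:
  assumes "discrete_indexed I G" "\<And>i. i \<in> I \<Longrightarrow> H i \<subseteq> G i"
  shows "discrete_indexed I H"
  unfolding discrete_indexed_def
proof
  fix x
  obtain V where "open V" "x \<in> V"
    and one: "\<And>i j. i \<in> I \<Longrightarrow> j \<in> I \<Longrightarrow> V \<inter> G i \<noteq> {} \<Longrightarrow> V \<inter> G j \<noteq> {} \<Longrightarrow> i = j"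
    using assms(1) unfolding discrete_indexed_def by metis
  have "i = j" if "i \<in> I" "j \<in> I" "V \<inter> H i \<noteq> {}" "V \<inter> H j \<noteq> {}" for i j
  proof (rule one[OF that(1,2)])
    show "V \<inter> G i \<noteq> {}" "V \<inter> G j \<noteq> {}"
      using that assms(2) by blast+
  qed
  then show "\<exists>V. open V \<and> x \<in> V \<and> (\<forall>i\<in>I. \<forall>j\<in>I. V \<inter> H i \<noteq> {} \<and> V \<inter> H j \<noteq> {} \<longrightarrow> i = j)"
    using \<open>open V\<close> \<open>x \<in> V\<close> by blast
qed

lemma discrete_family_image:
  assumes "discrete_indexed I A"
  shows "discrete_family (A ` I)"
  unfolding discrete_family_def
proof
  fix x
  obtain V where "open V" "x \<in> V"
    and one: "\<And>i j. i \<in> I \<Longrightarrow> j \<in> I \<Longrightarrow> V \<inter> A i \<noteq> {} \<Longrightarrow> V \<inter> A j \<noteq> {} \<Longrightarrow> i = j"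
    using assms unfolding discrete_indexed_def by metis
  have "B = C" if "B \<in> A ` I" "C \<in> A ` I" "V \<inter> B \<noteq> {}" "V \<inter> C \<noteq> {}" for B C
    using that one by blast
  then show "\<exists>V. open V \<and> x \<in> V \<and> (\<forall>B\<in>A ` I. \<forall>C\<in>A ` I. V \<inter> B \<noteq> {} \<and> V \<inter> C \<noteq> {} \<longrightarrow> B = C)"
    using \<open>open V\<close> \<open>x \<in> V\<close> by blast
qed

text \<open>Indices with empty \<open>A i\<close> must be discarded: they may share their image with other indices.\<close>
lemma discrete_indexed_pullback:
  assumes disc: "discrete_indexed I A" and G_disc: "discrete_indexed (A ` I) G"
  shows "discrete_indexed I (\<lambda>i. if A i = {} then {} else G (A i))"
  unfolding discrete_indexed_def
proof
  fix x
  obtain V where "open V" "x \<in> V"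
    and V: "\<And>B C. B \<in> A ` I \<Longrightarrow> C \<in> A ` I \<Longrightarrow> V \<inter> G B \<noteq> {} \<Longrightarrow> V \<inter> G C \<noteq> {} \<Longrightarrow> B = C"
    using G_disc unfolding discrete_indexed_def by metis
  have "i = j" if "i \<in> I" "j \<in> I" "V \<inter> (if A i = {} then {} else G (A i)) \<noteq> {}"
    "V \<inter> (if A j = {} then {} else G (A j)) \<noteq> {}" for i j
  proof -
    have "A i = A j" "A i \<noteq> {}"
      using V[of "A i" "A j"] that by (auto split: if_splits)
    then obtain z where "z \<in> A i" "z \<in> A j"
      by auto
    moreover obtain V' where "z \<in> V'"
      and "\<And>i j. i \<in> I \<Longrightarrow> j \<in> I \<Longrightarrow> V' \<inter> A i \<noteq> {} \<Longrightarrow> V' \<inter> A j \<noteq> {} \<Longrightarrow> i = j"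
      using disc unfolding discrete_indexed_def by metis
    ultimately show "i = j"
      using that(1,2) by blast
  qed
  then show "\<exists>V. open V \<and> x \<in> V \<and> (\<forall>i\<in>I. \<forall>j\<in>I.
      V \<inter> (if A i = {} then {} else G (A i)) \<noteq> {} \<and> V \<inter> (if A j = {} then {} else G (A j)) \<noteq> {} \<longrightarrow> i = j)"
    using \<open>open V\<close> \<open>x \<in> V\<close> by blast
qed

lemma collectionwise_normal_discrete_expansion:
  fixes A W :: "'i \<Rightarrow> 'a::topological_space set"
  assumes cwn: "collectionwise_normal TYPE('a)"
    and closed: "\<And>i. i \<in> I \<Longrightarrow> closed (A i)"
    and open_W: "\<And>i. i \<in> I \<Longrightarrow> open (W i)"
    and A_W: "\<And>i. i \<in> I \<Longrightarrow> A i \<subseteq> W i"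
    and disc: "discrete_indexed I A"
  obtains G where "\<And>i. i \<in> I \<Longrightarrow> open (G i) \<and> A i \<subseteq> G i \<and> G i \<subseteq> W i"
    and "discrete_indexed I G"
proof -
  have "\<forall>B\<in>A ` I. closed B"
    by (simp add: closed)
  then have "\<exists>G0. (\<forall>B\<in>A ` I. open (G0 B) \<and> B \<subseteq> G0 B) \<and> discrete_indexed (A ` I) G0"
    by (rule cwn[unfolded collectionwise_normal_def, THEN conjunct2, rule_format,
          OF conjI[OF _ discrete_family_image[OF disc]]])
  then obtain G0 where G0: "\<forall>B\<in>A ` I. open (G0 B) \<and> B \<subseteq> G0 B"
    and G0_disc: "discrete_indexed (A ` I) G0"
    by (elim exE conjE)
  define G where "G i = (if A i = {} then {} else G0 (A i) \<inter> W i)" for i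
  have "open (G i) \<and> A i \<subseteq> G i \<and> G i \<subseteq> W i" if "i \<in> I" for i
    using bspec[OF G0, of "A i"] open_W[OF that] A_W[OF that] that unfolding G_def by auto
  moreover have "discrete_indexed I G"
    by (rule discrete_indexed_mono[OF discrete_indexed_pullback[OF disc G0_disc]]) (auto simp: G_def)
  ultimately show ?thesis
    by (rule that)
qed

lemma collectionwise_normal_imp_normal_space:
  assumes "collectionwise_normal TYPE('a::topological_space)"
  shows "normal_space (euclidean :: 'a topology)"
  unfolding normal_space_def
proof (intro allI impI)
  fix S T :: "'a set"
  assume "closedin euclidean S \<and> closedin euclidean T \<and> disjnt S T"
  then have closed: "closed S" "closed T" and "S \<inter> T = {}"
    by (auto simp: disjnt_def)
  define A where "A b = (if b then S else T)" for b
  have disc_A: "discrete_indexed UNIV A"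
    unfolding discrete_indexed_def
  proof
    fix x
    have "open (if x \<in> S then - T else - S)"
      using closed by auto
    then show "\<exists>V. open V \<and> x \<in> V \<and> (\<forall>i\<in>UNIV. \<forall>j\<in>UNIV. V \<inter> A i \<noteq> {} \<and> V \<inter> A j \<noteq> {} \<longrightarrow> i = j)"
      using \<open>S \<inter> T = {}\<close> by (intro exI[of _ "if x \<in> S then - T else - S"]) (auto simp: A_def)
  qed
  have closed_A: "closed (A b)" for b
    using closed by (simp add: A_def)
  obtain G where G: "\<And>b. open (G b) \<and> A b \<subseteq> G b" and disc: "discrete_indexed UNIV G"
    using collectionwise_normal_discrete_expansion[OF assms closed_A _ _ disc_A, of "\<lambda>_. UNIV"] by auto
  have "G True \<inter> G False = {}"
  proof (rule equals0I)
    fix z assume "z \<in> G True \<inter> G False"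
    moreover obtain V where "z \<in> V" "\<forall>i\<in>UNIV. \<forall>j\<in>UNIV. V \<inter> G i \<noteq> {} \<and> V \<inter> G j \<noteq> {} \<longrightarrow> i = j"
      using disc unfolding discrete_indexed_def by blast
    ultimately show False by blast
  qed
  moreover have "open (G True)" "open (G False)" "S \<subseteq> G True" "T \<subseteq> G False"
    using G[of True] G[of False] unfolding A_def by simp_all
  ultimately show "\<exists>U V. openin euclidean U \<and> openin euclidean V \<and> S \<subseteq> U \<and> T \<subseteq> V \<and> disjnt U V"
    unfolding disjnt_def by (intro exI[of _ "G True"] exI[of _ "G False"]) simp
qed

definition discrete_urysohn_family ::
    "'i set \<Rightarrow> ('i \<Rightarrow> 'a::topological_space set) \<Rightarrow> ('i \<Rightarrow> 'a set) \<Rightarrow> ('i \<Rightarrow> 'a \<Rightarrow> real) \<Rightarrow> bool"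
  where "discrete_urysohn_family I A W g \<longleftrightarrow>
    (\<forall>i\<in>I. continuous_on UNIV (g i) \<and> (\<forall>x. 0 \<le> g i x \<and> g i x \<le> 1)
      \<and> (\<forall>x\<in>A i. g i x = 1) \<and> (\<forall>x. g i x \<noteq> 0 \<longrightarrow> x \<in> W i))
    \<and> discrete_indexed I (\<lambda>i. {x. g i x \<noteq> 0})"

lemma collectionwise_normal_discrete_urysohn:
  fixes A W :: "'i \<Rightarrow> 'a::topological_space set"
  assumes cwn: "collectionwise_normal TYPE('a)"
    and closed: "\<And>i. i \<in> I \<Longrightarrow> closed (A i)"
    and open_W: "\<And>i. i \<in> I \<Longrightarrow> open (W i)"
    and A_W: "\<And>i. i \<in> I \<Longrightarrow> A i \<subseteq> W i"
    and disc: "discrete_indexed I A"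
  shows "\<exists>g. discrete_urysohn_family I A W g"
proof -
  obtain G where G: "\<And>i. i \<in> I \<Longrightarrow> open (G i) \<and> A i \<subseteq> G i \<and> G i \<subseteq> W i"
    and G_disc: "discrete_indexed I G"
    using collectionwise_normal_discrete_expansion[OF assms] by blast
  have normal: "normal_space (euclidean :: 'a topology)"
    by (rule collectionwise_normal_imp_normal_space[OF cwn])
  have "\<forall>i\<in>I. \<exists>g. continuous_map euclidean (top_of_set {0..1}) g \<and> g ` (- G i) \<subseteq> {0} \<and> g ` A i \<subseteq> {1::real}"
  proof
    fix i assume "i \<in> I"
    then have "closedin euclidean (- G i)" "closedin euclidean (A i)" "disjnt (- G i) (A i)"
      using G closed by (auto simp: disjnt_def)
    then obtain g :: "'a \<Rightarrow> real" where "continuous_map euclidean (top_of_set {0..1}) g"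
      "g ` (- G i) \<subseteq> {0}" "g ` A i \<subseteq> {1}"
      by (rule Urysohn_lemma[OF normal _ _ _ zero_le_one])
    then show "\<exists>g. continuous_map euclidean (top_of_set {0..1}) g \<and> g ` (- G i) \<subseteq> {0} \<and> g ` A i \<subseteq> {1::real}"
      by blast
  qed
  then obtain g where g: "\<forall>i\<in>I. continuous_map euclidean (top_of_set {0..1}) (g i)
      \<and> g i ` (- G i) \<subseteq> {0} \<and> g i ` A i \<subseteq> {1::real}"
    by (rule bchoice[THEN exE])
  have g_i: "continuous_on UNIV (g i) \<and> (\<forall>x. 0 \<le> g i x \<and> g i x \<le> 1) \<and> (\<forall>x\<in>A i. g i x = 1)"
    if "i \<in> I" for i
    using bspec[OF g that] by (auto simp: continuous_map_in_subtopology Pi_iff)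
  have support: "x \<in> G i" if "i \<in> I" "g i x \<noteq> 0" for i x
    using bspec[OF g that(1)] that(2) by auto
  have "discrete_indexed I (\<lambda>i. {x. g i x \<noteq> 0})"
    by (rule discrete_indexed_mono[OF G_disc]) (use support in blast)
  then show ?thesis
    unfolding discrete_urysohn_family_def using g_i G support
    by (intro exI[of _ g] conjI ballI allI impI) blast+
qed

section \<open>Star layers\<close>

lemma closed_star_kernel:
  assumes "\<And>W. W \<in> \<V> \<Longrightarrow> open W"
  shows "closed {x. st x \<V> \<subseteq> U}"
proof -
  have "{x. st x \<V> \<subseteq> U} = - \<Union>{W \<in> \<V>. \<not> W \<subseteq> U}"
    unfolding st_def by blast
  then show ?thesis
    using assms by (simp add: closed_Compl open_Union)
qed

definition star_layer :: "'a set rel \<Rightarrow> 'a set set \<Rightarrow> 'a set set \<Rightarrow> 'a set \<Rightarrow> 'a set" where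
  "star_layer r \<U> \<W> U = {x. st x \<W> \<subseteq> U} - \<Union>{U' \<in> \<U>. (U', U) \<in> r - Id}"

lemma closed_star_layer:
  assumes "open_cover \<U>" "open_cover \<W>"
  shows "closed (star_layer r \<U> \<W> U)"
  using assms unfolding star_layer_def open_cover_def
  by (intro closed_Diff closed_star_kernel open_Union) auto

lemma in_st_if_open_cover:
  assumes "open_cover \<W>"
  shows "x \<in> st x \<W>"
proof -
  have "x \<in> \<Union>\<W>"
    using assms unfolding open_cover_def by simp
  then show ?thesis
    unfolding st_def by blast
qed

lemma star_layer_subset:
  assumes "open_cover \<W>"
  shows "star_layer r \<U> \<W> U \<subseteq> U"
  using in_st_if_open_cover[OF assms] unfolding star_layer_def by blast

text \<open>Two layer points in a common member \<open>W\<close> of \<open>\<W>\<close> would put the later one into the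
  earlier set, since \<open>W\<close> lies in the star of each.\<close>
lemma discrete_star_layers:
  assumes "open_cover \<W>" and total: "\<And>U U'. U \<noteq> U' \<Longrightarrow> (U, U') \<in> r \<or> (U', U) \<in> r"
  shows "discrete_indexed \<U> (star_layer r \<U> \<W>)"
  unfolding discrete_indexed_def
proof
  fix z
  obtain W where W: "W \<in> \<W>" "z \<in> W"
    using in_st_if_open_cover[OF assms(1), of z] unfolding st_def by blast
  have "U = U'" if "U \<in> \<U>" "U' \<in> \<U>" "x \<in> W" "y \<in> W"
    "x \<in> star_layer r \<U> \<W> U" "y \<in> star_layer r \<U> \<W> U'" for U U' x y
  proof -
    have "x \<in> U'" "y \<in> U"
      using that W(1) unfolding star_layer_def st_def by auto
    then have "(U, U') \<notin> r - Id" "(U', U) \<notin> r - Id"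
      using that(1,2,5,6) unfolding star_layer_def by blast+
    then show ?thesis
      using total by blast
  qed
  moreover have "open W"
    using W(1) assms(1) unfolding open_cover_def by blast
  ultimately show "\<exists>V. open V \<and> z \<in> V \<and> (\<forall>U\<in>\<U>. \<forall>U'\<in>\<U>.
      V \<inter> star_layer r \<U> \<W> U \<noteq> {} \<and> V \<inter> star_layer r \<U> \<W> U' \<noteq> {} \<longrightarrow> U = U')"
    using W(2) by blast
qed

lemma star_layers_cover:
  assumes "wf (r - Id)" "open_cover \<U>"
    and star: "\<And>U x. U \<in> \<U> \<Longrightarrow> x \<in> U \<Longrightarrow> \<exists>n. st x (\<V> n) \<subseteq> U"
  shows "\<exists>n. \<exists>U\<in>\<U>. x \<in> star_layer r \<U> (\<V> n) U"
proof -
  have "x \<in> \<Union>\<U>"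
    using assms(2) unfolding open_cover_def by simp
  then obtain U where U: "U \<in> \<U>" "x \<in> U"
    and minimal: "\<And>U'. (U', U) \<in> r - Id \<Longrightarrow> U' \<notin> {U \<in> \<U>. x \<in> U}"
    using wfE_min[OF assms(1), of _ "{U \<in> \<U>. x \<in> U}"] by blast
  obtain n where "st x (\<V> n) \<subseteq> U"
    using star U by blast
  then have "x \<in> star_layer r \<U> (\<V> n) U"
    using minimal unfolding star_layer_def by blast
  then show ?thesis
    using U(1) by blast
qed

lemma discrete_closed_star_layers:
  fixes \<U> :: "'a::topological_space set set" and \<V> :: "nat \<Rightarrow> 'a set set"
  assumes "open_cover \<U>" and \<V>: "\<And>n. open_cover (\<V> n)"
    and star: "\<And>U x. U \<in> \<U> \<Longrightarrow> x \<in> U \<Longrightarrow> \<exists>n. st x (\<V> n) \<subseteq> U"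
  obtains A :: "nat \<Rightarrow> 'a set \<Rightarrow> 'a set"
  where "\<And>n U. closed (A n U)" "\<And>n U. A n U \<subseteq> U"
    "\<And>n. discrete_indexed \<U> (A n)" "\<And>x. \<exists>n. \<exists>U\<in>\<U>. x \<in> A n U"
proof -
  obtain r :: "'a set rel" where r: "Well_order r" "Field r = UNIV"
    using well_ordering[where 'a = "'a set"] by (rule exE) blast
  have total: "(U, U') \<in> r \<or> (U', U) \<in> r" if "U \<noteq> U'" for U U'
  proof -
    have "total_on (Field r) r"
      using r(1) unfolding well_order_on_def linear_order_on_def by blast
    then show ?thesis
      using that unfolding r(2) total_on_def by blast
  qed
  have "wf (r - Id)"
    using r(1) by (simp add: well_order_on_def)
  show ?thesis
  proof (rule that)
    show "closed (star_layer r \<U> (\<V> n) U)" for n U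
      by (rule closed_star_layer[OF assms(1) \<V>])
    show "star_layer r \<U> (\<V> n) U \<subseteq> U" for n U
      by (rule star_layer_subset[OF \<V>])
    show "discrete_indexed \<U> (star_layer r \<U> (\<V> n))" for n
      by (rule discrete_star_layers[OF \<V> total])
    show "\<exists>n. \<exists>U\<in>\<U>. x \<in> star_layer r \<U> (\<V> n) U" for x
      by (rule star_layers_cover[OF \<open>wf (r - Id)\<close> assms(1) star])
  qed
qed

lemma partition_of_unity_from_discrete_urysohn_families:
  fixes g :: "nat \<Rightarrow> 's \<Rightarrow> 'a::topological_space \<Rightarrow> real"
  assumes g: "\<And>n. discrete_urysohn_family S (A n) W (g n)"
    and cover: "\<And>x. \<exists>n. \<exists>s\<in>S. x \<in> A n s"
  shows "\<exists>f. partition_of_unity S f \<and> (\<forall>s\<in>S. {x. f s x \<in> {0<..1}} \<subseteq> W s)"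
proof -
  have g_cont: "\<And>n s. s \<in> S \<Longrightarrow> continuous_on UNIV (g n s)"
    and g_unit: "\<And>n s x. s \<in> S \<Longrightarrow> 0 \<le> g n s x \<and> g n s x \<le> 1"
    and g_one: "\<And>n s x. s \<in> S \<Longrightarrow> x \<in> A n s \<Longrightarrow> g n s x = 1"
    and g_support: "\<And>n s x. s \<in> S \<Longrightarrow> g n s x \<noteq> 0 \<Longrightarrow> x \<in> W s"
    and g_disc: "\<And>n. discrete_indexed S (\<lambda>s. {x. g n s x \<noteq> 0})"
    using g unfolding discrete_urysohn_family_def by blast+
  have g_sum_le: "(\<Sum>s\<in>F. g n s x) \<le> 1" if "finite F" "F \<subseteq> S" for n x F
    using sum_le_one_if_discrete_supports[OF g_disc] g_unit that by blast
  define h where "h s x = (\<Sum>n. (1/2)^n * g n s x)" for s x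
  have h_nonneg: "0 \<le> h s x" if "s \<in> S" for s x
    unfolding h_def using g_unit[OF that]
    by (intro suminf_nonneg summable_geometric_weighted[of _ 1]) (simp_all add: abs_le_iff)
  have h_positive: "\<exists>s\<in>S. 0 < h s x" for x
  proof -
    obtain n s where "s \<in> S" "x \<in> A n s"
      using cover by blast
    then show ?thesis
      unfolding h_def using g_unit g_one
      by (intro bexI[of _ s] suminf_geometric_weighted_pos[of _ 1 n]) auto
  qed
  have "partition_of_unity S (\<lambda>s x. h s x / infsum (\<lambda>s. h s x) S)"
  proof (rule partition_of_unity_normalise[OF h_nonneg _ h_positive])
    show "(\<Sum>s\<in>F. h s x) \<le> 2" if "finite F" "F \<subseteq> S" for x F
      unfolding h_def using g_unit g_sum_le that by (intro sum_suminf_geometric_le) auto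
    show "l1_continuous S h"
      unfolding h_def using g_unit g_sum_le g_disc g_cont
      by (intro l1_continuous_suminf_geometric l1_continuous_if_discrete_supports) auto
  qed
  moreover have "x \<in> W s" if "s \<in> S" "h s x / infsum (\<lambda>s. h s x) S \<in> {0<..1}" for s x
  proof -
    have "h s x \<noteq> 0"
      using that(2) by auto
    then obtain n where "g n s x \<noteq> 0"
      unfolding h_def by force
    then show ?thesis
      using g_support[OF that(1)] by blast
  qed
  ultimately show ?thesis
    by blast
qed

lemma collectionwise_normal_small_partition_of_unity:
  fixes \<U> :: "'a::topological_space set set" and A :: "nat \<Rightarrow> 'a set \<Rightarrow> 'a set"
  assumes cwn: "collectionwise_normal TYPE('a)" and "open_cover \<U>"
    and "\<And>n U. closed (A n U)" "\<And>n U. A n U \<subseteq> U"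
    and "\<And>n. discrete_indexed \<U> (A n)" and cover: "\<And>x. \<exists>n. \<exists>U\<in>\<U>. x \<in> A n U"
  shows "\<exists>f. partition_of_unity \<U> f \<and> small_partition \<U> \<U> f"
proof -
  have "\<exists>g. discrete_urysohn_family \<U> (A n) (\<lambda>U. U) g" for n
    using assms(2-5) by (intro collectionwise_normal_discrete_urysohn[OF cwn]) (auto simp: open_cover_def)
  then obtain g where "\<And>n. discrete_urysohn_family \<U> (A n) (\<lambda>U. U) (g n)"
    by metis
  from partition_of_unity_from_discrete_urysohn_families[OF this cover] show ?thesis
    unfolding small_partition_def by blast
qed

theorem theorem5p5:
  fixes \<U> :: "'a::topological_space set set"
    and \<V> :: "nat \<Rightarrow> 'a set set"
  assumes "collectionwise_normal TYPE('a)"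
    and "open_cover \<U>"
    and "\<And>n. n \<ge> 1 \<Longrightarrow> open_cover (\<V> n)"
    and "\<And>U x. U \<in> \<U> \<Longrightarrow> x \<in> U \<Longrightarrow> \<exists>n\<ge>1. st x (\<V> n) \<subseteq> U"
  shows "\<exists>(S::'a set set) f. partition_of_unity S f \<and> small_partition \<U> S f"
proof -
  have star: "\<exists>n. st x (\<V> (Suc n)) \<subseteq> U" if U: "U \<in> \<U>" "x \<in> U" for U x
  proof -
    obtain n where "n \<ge> 1" "st x (\<V> n) \<subseteq> U"
      using assms(4)[OF U] by blast
    then show ?thesis
      by (intro exI[of _ "n - 1"]) simp
  qed
  have open_cover: "open_cover (\<V> (Suc n))" for n
    using assms(3) by simp
  show ?thesis
  proof (rule discrete_closed_star_layers[where \<V> = "\<lambda>n. \<V> (Suc n)", OF assms(2) open_cover star])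
    fix A :: "nat \<Rightarrow> 'a set \<Rightarrow> 'a set"
    assume "\<And>n U. closed (A n U)" "\<And>n U. A n U \<subseteq> U"
      "\<And>n. discrete_indexed \<U> (A n)" "\<And>x. \<exists>n. \<exists>U\<in>\<U>. x \<in> A n U"
    from collectionwise_normal_small_partition_of_unity[OF assms(1,2) this] show ?thesis
      by blast
  qed
qed

end
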